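(* Let $(\Omega,\mathcal{F})$ be a measurable space, let $\mathrm{B}_b$ denote the space of all bounded real-valued $\mathcal{F}$-measurable functions on $\Omega$, and let $C\subset \mathrm{B}_b$ be a set with $0\in C$ and $X+m\in C$ for all $X\in C$ and $m\in\mathbb{R}$. A map $H\colon C\to\mathbb{R}$ is a premium principle if and only if there exist a risk measure $R\colon \mathrm{B}_b\to\mathbb{R}$ and a deviation measure $D\colon C\to\mathbb{R}$ such that $$H(X)=R(X)+D(X)\quad\text{for all }X\in C.$$
   Context: Constants are identified with constant functions, and $\le$ denotes the pointwise order on $\mathrm{B}_b$. A map $H\colon C\to\mathbb{R}$ is a premium principle if (P1) $H(X+m)=H(X)+m$ for all $X\in C$, $m\in\mathbb{R}$, and (P2) $H(0)=0$ and $H(X)\ge 0$ for all $X\in C$ with $X\ge 0$. A map $R\colon \mathrm{B}_b\to\mathbb{R}$ is a risk measure if $R(X+m)=R(X)+m$ for all $X\in\mathrm{B}_b$, $m\in\mathbb{R}$, and $R(0)=0$ and $R(X)\le R(Y)$ whenever $X\le Y$. A map $D\colon C\to\mathbb{R}$ is a deviation measure if $D(X+m)=D(X)$ for all $X\in C$, $m\in\mathbb{R}$, and $D(0)=0$ and $D(X)\ge 0$ for all $X\in C$. *)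

theory Defs
  imports "HOL-Analysis.Analysis" "HOL-Probability.Probability"
begin

text \<open>Bounded real-valued measurable functions on the measurable space M.
  Functions are total HOL functions; only their values on space M matter,
  pointwise order is taken on space M.\<close>
definition Bb :: "'a measure \<Rightarrow> ('a \<Rightarrow> real) set" where
  "Bb M = {X. X \<in> borel_measurable M \<and> bounded (X ` space M)}"

definition le_on :: "'a measure \<Rightarrow> ('a \<Rightarrow> real) \<Rightarrow> ('a \<Rightarrow> real) \<Rightarrow> bool" where
  "le_on M X Y \<longleftrightarrow> (\<forall>\<omega>\<in>space M. X \<omega> \<le> Y \<omega>)"

definition premium_principle ::
  "'a measure \<Rightarrow> ('a \<Rightarrow> real) set \<Rightarrow> (('a \<Rightarrow> real) \<Rightarrow> real) \<Rightarrow> bool" where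
  "premium_principle M C H \<longleftrightarrow>
     (\<forall>X\<in>C. \<forall>m::real. H (\<lambda>\<omega>. X \<omega> + m) = H X + m) \<and>
     H (\<lambda>_. 0) = 0 \<and>
     (\<forall>X\<in>C. le_on M (\<lambda>_. 0) X \<longrightarrow> H X \<ge> 0)"

definition risk_measure :: "'a measure \<Rightarrow> (('a \<Rightarrow> real) \<Rightarrow> real) \<Rightarrow> bool" where
  "risk_measure M R \<longleftrightarrow>
     (\<forall>X\<in>Bb M. \<forall>m::real. R (\<lambda>\<omega>. X \<omega> + m) = R X + m) \<and>
     R (\<lambda>_. 0) = 0 \<and>
     (\<forall>X\<in>Bb M. \<forall>Y\<in>Bb M. le_on M X Y \<longrightarrow> R X \<le> R Y)"

definition deviation_measure ::
  "'a measure \<Rightarrow> ('a \<Rightarrow> real) set \<Rightarrow> (('a \<Rightarrow> real) \<Rightarrow> real) \<Rightarrow> bool" where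
  "deviation_measure M C D \<longleftrightarrow>
     (\<forall>X\<in>C. \<forall>m::real. D (\<lambda>\<omega>. X \<omega> + m) = D X) \<and>
     D (\<lambda>_. 0) = 0 \<and>
     (\<forall>X\<in>C. D X \<ge> 0)"

end

theory Submission
  imports Defs
begin

text \<open>A risk measure plus a deviation measure inherits translation equivariance, normalisation
  and (via monotonicity from 0) nonnegativity on nonnegative positions. Conversely, the
  infimum \<open>inf X\<close> is a risk measure, and every premium principle dominates it, because
  \<open>X - inf X \<ge> 0\<close> and \<open>H (X - inf X) = H X - inf X\<close>; hence \<open>D = H - inf\<close> is a deviation measure.\<close>

lemma Bb_bdd_below: "X \<in> Bb M \<Longrightarrow> bdd_below (X ` space M)"
  unfolding Bb_def by (auto intro: bounded_imp_bdd_below)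

lemma INF_translate:
  assumes "X \<in> Bb M" "space M \<noteq> {}"
  shows "(INF \<omega>\<in>space M. X \<omega> + m) = (INF \<omega>\<in>space M. X \<omega>) + m"
  using Inf_add_eq[OF Bb_bdd_below[OF assms(1)] assms(2), of m] by (simp add: add.commute)

lemma risk_measure_INF:
  assumes "space M \<noteq> {}"
  shows "risk_measure M (\<lambda>X. INF \<omega>\<in>space M. X \<omega>)"
  unfolding risk_measure_def
proof (intro conjI ballI allI impI)
  fix X m assume "X \<in> Bb M"
  then show "(INF \<omega>\<in>space M. X \<omega> + m) = (INF \<omega>\<in>space M. X \<omega>) + m"
    using INF_translate assms by blast
next
  show "(INF \<omega>\<in>space M. 0) = (0::real)"
    using assms by simp
next
  fix X Y assume "X \<in> Bb M" "le_on M X Y"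
  then show "(INF \<omega>\<in>space M. X \<omega>) \<le> (INF \<omega>\<in>space M. Y \<omega>)"
    using cINF_mono[OF assms Bb_bdd_below] unfolding le_on_def by blast
qed

text \<open>On an empty sample space every position is nonnegative, so the constant \<open>-1\<close> would
  need a nonnegative premium.\<close>

lemma premium_principle_space_nonempty:
  assumes "premium_principle M C H" "(\<lambda>_. 0) \<in> C"
    and "\<And>X m. X \<in> C \<Longrightarrow> (\<lambda>\<omega>. X \<omega> + m) \<in> C"
  shows "space M \<noteq> {}"
proof
  assume "space M = {}"
  then have "le_on M (\<lambda>_. 0) (\<lambda>_. 0 + -1)"
    by (simp add: le_on_def)
  moreover have "(\<lambda>_. 0 + -1) \<in> C"
    using assms(2,3) by blast
  ultimately have "H (\<lambda>_. 0 + -1) \<ge> 0"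
    using assms(1) by (simp add: premium_principle_def)
  moreover have "H (\<lambda>_. 0 + -1) = H (\<lambda>_. 0) - 1"
    using assms(1,2) unfolding premium_principle_def by fastforce
  ultimately show False
    using assms(1) by (simp add: premium_principle_def)
qed

lemma premium_principle_ge_INF:
  assumes "premium_principle M C H" "C \<subseteq> Bb M"
    and "\<And>X m. X \<in> C \<Longrightarrow> (\<lambda>\<omega>. X \<omega> + m) \<in> C"
    and "X \<in> C"
  shows "(INF \<omega>\<in>space M. X \<omega>) \<le> H X"
proof -
  define c where "c = (INF \<omega>\<in>space M. X \<omega>)"
  have "le_on M (\<lambda>_. 0) (\<lambda>\<omega>. X \<omega> + - c)"
    using assms(2,4) Bb_bdd_below unfolding le_on_def c_def by (force intro: cINF_lower)
  then have "H (\<lambda>\<omega>. X \<omega> + - c) \<ge> 0"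
    using assms(1,3,4) unfolding premium_principle_def by blast
  moreover have "H (\<lambda>\<omega>. X \<omega> + - c) = H X + - c"
    using assms(1,4) unfolding premium_principle_def by blast
  ultimately show ?thesis
    unfolding c_def by linarith
qed

lemma deviation_measure_premium_minus_INF:
  assumes "premium_principle M C H" "C \<subseteq> Bb M" "space M \<noteq> {}"
    and "\<And>X m. X \<in> C \<Longrightarrow> (\<lambda>\<omega>. X \<omega> + m) \<in> C"
  shows "deviation_measure M C (\<lambda>X. H X - (INF \<omega>\<in>space M. X \<omega>))"
  unfolding deviation_measure_def
proof (intro conjI ballI allI)
  fix X m assume X: "X \<in> C"
  then have "H (\<lambda>\<omega>. X \<omega> + m) = H X + m"
    using assms(1) unfolding premium_principle_def by blast
  moreover have "(INF \<omega>\<in>space M. X \<omega> + m) = (INF \<omega>\<in>space M. X \<omega>) + m"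
    using X assms(2,3) INF_translate by blast
  ultimately show "H (\<lambda>\<omega>. X \<omega> + m) - (INF \<omega>\<in>space M. X \<omega> + m) = H X - (INF \<omega>\<in>space M. X \<omega>)"
    by simp
next
  show "H (\<lambda>_. 0) - (INF \<omega>\<in>space M. 0) = 0"
    using assms(1,3) by (simp add: premium_principle_def)
next
  fix X assume "X \<in> C"
  then show "0 \<le> H X - (INF \<omega>\<in>space M. X \<omega>)"
    using premium_principle_ge_INF[OF assms(1,2,4)] by simp
qed

lemma premium_principle_risk_plus_deviation:
  assumes "risk_measure M R" "deviation_measure M C D" "C \<subseteq> Bb M" "(\<lambda>_. 0) \<in> C"
    and "\<And>X m. X \<in> C \<Longrightarrow> (\<lambda>\<omega>. X \<omega> + m) \<in> C"
    and "\<And>X. X \<in> C \<Longrightarrow> H X = R X + D X"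
  shows "premium_principle M C H"
  unfolding premium_principle_def
proof (intro conjI ballI allI impI)
  fix X m assume "X \<in> C"
  then show "H (\<lambda>\<omega>. X \<omega> + m) = H X + m"
    using assms unfolding risk_measure_def deviation_measure_def by auto
next
  show "H (\<lambda>_. 0) = 0"
    using assms unfolding risk_measure_def deviation_measure_def by auto
next
  fix X assume X: "X \<in> C" "le_on M (\<lambda>_. 0) X"
  then have "R (\<lambda>_. 0) \<le> R X"
    using assms(1,3,4) unfolding risk_measure_def by blast
  then show "0 \<le> H X"
    using X assms(1,2,6) unfolding risk_measure_def deviation_measure_def by fastforce
qed

theorem theorem2p2:
  fixes M :: "'a measure" and C :: "('a \<Rightarrow> real) set" and H :: "('a \<Rightarrow> real) \<Rightarrow> real"
  assumes "C \<subseteq> Bb M"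
    and "(\<lambda>_. 0) \<in> C"
    and "\<And>X m. X \<in> C \<Longrightarrow> (\<lambda>\<omega>. X \<omega> + m) \<in> C"
  shows "premium_principle M C H \<longleftrightarrow>
    (\<exists>R D. risk_measure M R \<and> deviation_measure M C D \<and> (\<forall>X\<in>C. H X = R X + D X))"
proof
  assume H: "premium_principle M C H"
  then have "space M \<noteq> {}"
    using premium_principle_space_nonempty assms(2,3) by blast
  then show "\<exists>R D. risk_measure M R \<and> deviation_measure M C D \<and> (\<forall>X\<in>C. H X = R X + D X)"
    using risk_measure_INF deviation_measure_premium_minus_INF[OF H assms(1) _ assms(3)]
    by fastforce
next
  assume "\<exists>R D. risk_measure M R \<and> deviation_measure M C D \<and> (\<forall>X\<in>C. H X = R X + D X)"
  then show "premium_principle M C H"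
    using premium_principle_risk_plus_deviation assms by metis
qed

end
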